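(* Suppose Assumption 1 (stated in the context) holds. Then, for any level $\ell=1,2,\dots,\mathsf{L}$: (1) The Markov chain on $(\mathsf{X}^2,\mathcal{B}(\mathsf{X}^2))$ generated by the joint kernel $\bm p_\ell$ has a unique invariant probability measure $\nu_\ell$. (2) This chain is uniformly ergodic: there exist a bounded, $\nu_\ell$-integrable function $V_{\ell-1,\ell}:\mathsf{X}^2\to[1,V_{\max,\ell}]$ (with $V_{\max,\ell}<\infty$), constants $r\in(0,1)$ and $M\in(0,\infty)$ such that $$\sup_{|f|\le V_{\ell-1,\ell}}\Big|(\bm P_\ell^n f)(\bm\theta_\ell)-\int_{\mathsf{X}^2} f\,\mathrm{d}\nu_\ell\Big|\le M V_{\max,\ell}\, r^n\qquad\forall \bm\theta_\ell\in\mathsf{X}^2,\ n\in\mathbb{N},$$ where the supremum is over all $\nu_\ell$-measurable $f:\mathsf{X}^2\to\mathbb{R}$ with $|f(\bm\theta_\ell)|\le V_{\ell-1,\ell}(\bm\theta_\ell)$ for all $\bm\theta_\ell\in\mathsf{X}^2$.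
   Context: Setting: $\mathsf{X}$ is a separable Banach space with Borel $\sigma$-algebra $\mathcal{B}(\mathsf{X})$, $\mu_{\mathrm{pr}}$ is a (prior) probability measure on $\mathsf{X}$. For levels $j=0,1,\dots,\mathsf{L}$, $\mu^y_j$ is a probability measure (posterior) on $\mathsf{X}$ with density $\pi^y_j$ with respect to $\mu_{\mathrm{pr}}$. For $\ell=1,\dots,\mathsf{L}$, $Q_\ell$ is a probability density with respect to $\mu_{\mathrm{pr}}$ (the independent proposal). For $j\in\{\ell-1,\ell\}$ and $\theta,z\in\mathsf{X}$ define the acceptance probability $\alpha_j(\theta,z)=\min\{1,\frac{\pi^y_j(z)Q_\ell(\theta)}{\pi^y_j(\theta)Q_\ell(z)}\}$. Joint kernel: for $\bm\theta_\ell=(\theta_{\ell,\ell-1},\theta_{\ell,\ell})\in\mathsf{X}^2$ and $A\in\mathcal{B}(\mathsf{X}^2)$, $\bm p_\ell(\bm\theta_\ell,A)=\int_\mathsf{X}\min\{\alpha_{\ell-1}(\theta_{\ell,\ell-1},z),\alpha_\ell(\theta_{\ell,\ell},z)\}\mathbf 1_{\{(z,z)\in A\}}Q_\ell(z)\mu_{\mathrm{pr}}(\mathrm{d}z)+\int_\mathsf{X}(\alpha_{\ell-1}(\theta_{\ell,\ell-1},z)-\alpha_\ell(\theta_{\ell,\ell},z))^+\mathbf 1_{\{(z,\theta_{\ell,\ell})\in A\}}Q_\ell(z)\mu_{\mathrm{pr}}(\mathrm{d}z)+\int_\mathsf{X}(\alpha_\ell(\theta_{\ell,\ell},z)-\alpha_{\ell-1}(\theta_{\ell,\ell-1},z))^+\mathbf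 1_{\{(\theta_{\ell,\ell-1},z)\in A\}}Q_\ell(z)\mu_{\mathrm{pr}}(\mathrm{d}z)+\mathbf 1_{\{\bm\theta_\ell\in A\}}\big(1-\int_\mathsf{X}\max\{\alpha_{\ell-1}(\theta_{\ell,\ell-1},z),\alpha_\ell(\theta_{\ell,\ell},z)\}Q_\ell(z)\mu_{\mathrm{pr}}(\mathrm{d}z)\big)$. (This is the kernel of two independent Metropolis–Hastings chains targeting $\mu^y_{\ell-1},\mu^y_\ell$ that share the same proposal $z\sim Q_\ell\mu_{\mathrm{pr}}$ and the same uniform random number for acceptance.) $\bm P_\ell$ denotes the associated Markov operator $(\bm P_\ell f)(\bm\theta)=\int f(\bm\eta)\bm p_\ell(\bm\theta,\mathrm{d}\bm\eta)$. Assumption 1: for all $\ell=1,\dots,\mathsf{L}$: (1.1) $Q_\ell$ is continuous and $Q_\ell(z)>0$ for all $z\in\mathsf{X}$; (1.2) $\pi^y_\ell$ is continuous and $\pi^y_\ell(z)>0$ for all $z$ (for all levels); (1.3) for $j=\ell-1,\ell$ and every $c_r>0$, the set $\{\theta\in\mathsf{X}: Q_\ell(\theta)/\pi^y_j(\theta)\le c_r\}$ is compact; (1.4) there exists $c\in(0,1)$ independent of $\ell$ with $\operatorname{ess\,inf}_{z\in\mathsf{X}}Q_\ell(z)/\pi^y_j(z)\ge c$ for $j=\ell-1,\ell$; (1.5) there exist $r>1$, $C_r>0$ independent of $\ell$ with $\int_\mathsf{X}Q_\ell^r\,\mathrm{d}\mu_{\mathrm{pr}}\le C_r$. *)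

theory Defs
  imports "HOL-Probability.Probability"
begin

text \<open>Acceptance probability alpha_j(theta,z) for the independence sampler of level l
  (proposal density Q l), targeting the posterior density ppi j (densities w.r.t. the prior).\<close>
definition alpha :: "(nat \<Rightarrow> 'a \<Rightarrow> real) \<Rightarrow> (nat \<Rightarrow> 'a \<Rightarrow> real) \<Rightarrow> nat \<Rightarrow> nat \<Rightarrow> 'a \<Rightarrow> 'a \<Rightarrow> real"
  where "alpha ppi Q l j theta z = min 1 ((ppi j z * Q l theta) / (ppi j theta * Q l z))"

definition joint_kernel ::
  "'a measure \<Rightarrow> (nat \<Rightarrow> 'a \<Rightarrow> real) \<Rightarrow> (nat \<Rightarrow> 'a \<Rightarrow> real) \<Rightarrow> nat \<Rightarrow> 'a \<times> 'a \<Rightarrow> ('a \<times> 'a) set \<Rightarrow> real"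
  where "joint_kernel mu ppi Q l th A =
     (\<integral>z. min (alpha ppi Q l (l - 1) (fst th) z) (alpha ppi Q l l (snd th) z)
            * indicator A (z, z) * Q l z \<partial>mu)
   + (\<integral>z. max 0 (alpha ppi Q l (l - 1) (fst th) z - alpha ppi Q l l (snd th) z)
            * indicator A (z, snd th) * Q l z \<partial>mu)
   + (\<integral>z. max 0 (alpha ppi Q l l (snd th) z - alpha ppi Q l (l - 1) (fst th) z)
            * indicator A (fst th, z) * Q l z \<partial>mu)
   + indicator A th * (1 - (\<integral>z. max (alpha ppi Q l (l - 1) (fst th) z) (alpha ppi Q l l (snd th) z)
            * Q l z \<partial>mu))"

definition joint_kernel_measure ::
  "'a measure \<Rightarrow> (nat \<Rightarrow> 'a \<Rightarrow> real) \<Rightarrow> (nat \<Rightarrow> 'a \<Rightarrow> real) \<Rightarrow> nat \<Rightarrow> 'a \<times> 'a \<Rightarrow> ('a \<times> 'a :: topological_space) measure"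
  where "joint_kernel_measure mu ppi Q l th =
     measure_of UNIV (sets borel) (\<lambda>A. ennreal (joint_kernel mu ppi Q l th A))"

definition markov_op ::
  "'a measure \<Rightarrow> (nat \<Rightarrow> 'a \<Rightarrow> real) \<Rightarrow> (nat \<Rightarrow> 'a \<Rightarrow> real) \<Rightarrow> nat \<Rightarrow> ('a \<times> 'a :: topological_space \<Rightarrow> real) \<Rightarrow> 'a \<times> 'a \<Rightarrow> real"
  where "markov_op mu ppi Q l f th = (\<integral>eta. f eta \<partial>(joint_kernel_measure mu ppi Q l th))"

definition invariant_prob ::
  "'a measure \<Rightarrow> (nat \<Rightarrow> 'a \<Rightarrow> real) \<Rightarrow> (nat \<Rightarrow> 'a \<Rightarrow> real) \<Rightarrow> nat \<Rightarrow> ('a \<times> 'a :: topological_space) measure \<Rightarrow> bool"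
  where "invariant_prob mu ppi Q l nu \<longleftrightarrow>
     prob_space nu \<and> sets nu = sets borel \<and>
     (\<forall>A \<in> sets borel. measure nu A = (\<integral>th. joint_kernel mu ppi Q l th A \<partial>nu))"

end

theory Submission
  imports Defs
begin

(* Both coupled chains propose the same point z ~ Q; with probability at least
   min(alpha_prev, alpha_cur) both accept and the pair jumps to the diagonal point (z, z).
   Since Q / ppi_j is continuous, positive and has compact sublevel sets, it is bounded below
   by some c > 0, and then this forced coalescence bounds every p(th, .) from below by one fixed
   nonzero measure on the diagonal: Doeblin's condition. Under it the Markov operator contracts
   the oscillation of bounded functions by the factor 1 - eps, so P^n f converges uniformly and
   geometrically to a constant. That constant is a positive linear functional of f, hence the
   integral of f against a probability measure, which is the unique invariant one; the rate
   gives uniform ergodicity with V = 1. *)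

section \<open>Bounded measurable functions\<close>

definition bounded_measurable :: "'b measure \<Rightarrow> ('b \<Rightarrow> real) \<Rightarrow> bool" where
  "bounded_measurable N f \<longleftrightarrow> f \<in> borel_measurable N \<and> (\<exists>B. \<forall>x. \<bar>f x\<bar> \<le> B)"

lemma bounded_measurableI:
  "f \<in> borel_measurable N \<Longrightarrow> (\<And>x. \<bar>f x\<bar> \<le> B) \<Longrightarrow> bounded_measurable N f"
  unfolding bounded_measurable_def by blast

lemma bounded_measurable_measurable: "bounded_measurable N f \<Longrightarrow> f \<in> borel_measurable N"
  unfolding bounded_measurable_def by blast

lemma bounded_measurableE:
  assumes "bounded_measurable N g"
  obtains B where "g \<in> borel_measurable N" "\<And>x. -B \<le> g x" "\<And>x. g x \<le> B"
  using assms unfolding bounded_measurable_def abs_le_iff by (meson minus_le_iff)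

lemma bounded_measurable_between:
  assumes "f \<in> borel_measurable N" "\<And>x. a \<le> f x" "\<And>x. f x \<le> b"
  shows "bounded_measurable N f"
proof (rule bounded_measurableI[OF assms(1)])
  show "\<bar>f x\<bar> \<le> \<bar>a\<bar> + \<bar>b\<bar>" for x using assms(2,3)[of x] by arith
qed

lemma bounded_measurable_const: "bounded_measurable N (\<lambda>x. c)"
  by (rule bounded_measurableI[where B="\<bar>c\<bar>"]) auto

lemma bounded_measurable_indicator: "A \<in> sets N \<Longrightarrow> bounded_measurable N (indicator A)"
  by (rule bounded_measurableI[where B=1]) (auto simp: indicator_def)

lemma bounded_measurable_add:
  assumes "bounded_measurable N f" "bounded_measurable N g"
  shows "bounded_measurable N (\<lambda>x. f x + g x)"
proof -
  obtain B C where "\<And>x. \<bar>f x\<bar> \<le> B" "\<And>x. \<bar>g x\<bar> \<le> C"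
    using assms unfolding bounded_measurable_def by blast
  then have "\<bar>f x + g x\<bar> \<le> B + C" for x
    by (meson abs_triangle_ineq add_mono order_trans)
  then show ?thesis
    using assms by (intro bounded_measurableI) (auto simp: bounded_measurable_def)
qed

lemma bounded_measurable_scale:
  assumes "bounded_measurable N f" shows "bounded_measurable N (\<lambda>x. c * f x)"
proof -
  obtain B where "\<And>x. \<bar>f x\<bar> \<le> B" using assms unfolding bounded_measurable_def by blast
  then have "\<bar>c * f x\<bar> \<le> \<bar>c\<bar> * B" for x by (simp add: abs_mult mult_left_mono)
  then show ?thesis
    using assms by (intro bounded_measurableI) (auto simp: bounded_measurable_def)
qed

lemma bounded_measurable_diff:
  assumes "bounded_measurable N f" "bounded_measurable N g"
  shows "bounded_measurable N (\<lambda>x. f x - g x)"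
  using bounded_measurable_add[OF assms(1) bounded_measurable_scale[OF assms(2), of "-1"]] by simp

lemma bounded_measurable_cong_sets:
  assumes "sets N = sets N'" shows "bounded_measurable N f = bounded_measurable N' f"
proof -
  have "borel_measurable N = borel_measurable N'" by (rule measurable_cong_sets) (use assms in simp_all)
  then show ?thesis unfolding bounded_measurable_def by auto
qed

lemma bounded_measurable_sum:
  "(\<And>i. i \<in> I \<Longrightarrow> bounded_measurable N (f i)) \<Longrightarrow> bounded_measurable N (\<lambda>x. \<Sum>i\<in>I. f i x)"
proof (induction I rule: infinite_finite_induct)
  case (insert i I)
  then show ?case by (simp add: bounded_measurable_add)
qed (simp_all add: bounded_measurable_const)

lemma (in finite_measure) integrable_bounded_measurable:
  assumes "bounded_measurable M f" shows "integrable M f"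
proof -
  obtain B where "\<And>x. \<bar>f x\<bar> \<le> B" using assms unfolding bounded_measurable_def by blast
  then show ?thesis
    using assms by (intro integrable_const_bound[where B=B]) (auto simp: bounded_measurable_def)
qed

lemma floor_step_approx:
  fixes g :: "'b \<Rightarrow> real"
  assumes space: "space N = UNIV" and g: "bounded_measurable N g" and k: "k > 0"
  shows "\<exists>J S. finite J \<and> (\<forall>j\<in>J. S j \<in> sets N) \<and>
    (\<forall>x. 0 \<le> g x - (\<Sum>j\<in>J. real_of_int j / k * indicator (S j) x)
       \<and> g x - (\<Sum>j\<in>J. real_of_int j / k * indicator (S j) x) \<le> 1 / k)"
proof -
  obtain B where B: "\<And>x. \<bar>g x\<bar> \<le> B" using g unfolding bounded_measurable_def by blast
  have [measurable]: "g \<in> borel_measurable N" using g by (rule bounded_measurable_measurable)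
  define S where "S j = {x \<in> space N. \<lfloor>g x * k\<rfloor> = j}" for j
  define J where "J = {-\<lceil>B * k\<rceil> - 1 .. \<lceil>B * k\<rceil> + 1}"
  have "S j \<in> sets N" for j unfolding S_def by measurable
  moreover have floor_in_J: "\<lfloor>g x * k\<rfloor> \<in> J" for x
  proof -
    have "\<bar>g x * k\<bar> \<le> B * k" using B[of x] k by (simp add: abs_mult)
    moreover have "B * k \<le> of_int \<lceil>B * k\<rceil>" by (rule le_of_int_ceiling)
    ultimately show ?thesis
      unfolding J_def using of_int_floor_le[of "g x * k"] real_of_int_floor_add_one_gt[of "g x * k"]
      by (simp add: abs_le_iff) linarith
  qed
  moreover have "(\<Sum>j\<in>J. real_of_int j / k * indicator (S j) x) = \<lfloor>g x * k\<rfloor> / k" for x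
  proof -
    have "(\<Sum>j\<in>J. real_of_int j / k * indicator (S j) x) =
          (\<Sum>j\<in>J. if j = \<lfloor>g x * k\<rfloor> then real_of_int j / k else 0)"
      by (rule sum.cong) (auto simp: S_def space indicator_def)
    then show ?thesis using floor_in_J[of x] by (simp add: J_def)
  qed
  moreover have "0 \<le> g x - \<lfloor>g x * k\<rfloor> / k" "g x - \<lfloor>g x * k\<rfloor> / k \<le> 1 / k" for x
  proof -
    have "g x - \<lfloor>g x * k\<rfloor> / k = (g x * k - \<lfloor>g x * k\<rfloor>) / k" using k by (simp add: field_simps)
    moreover have "0 \<le> g x * k - \<lfloor>g x * k\<rfloor>" "g x * k - \<lfloor>g x * k\<rfloor> \<le> 1"
      using of_int_floor_le[of "g x * k"] real_of_int_floor_add_one_gt[of "g x * k"] by linarith+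
    ultimately show "0 \<le> g x - \<lfloor>g x * k\<rfloor> / k" "g x - \<lfloor>g x * k\<rfloor> / k \<le> 1 / k"
      using k by (simp_all add: divide_right_mono)
  qed
  ultimately show ?thesis by (intro exI[of _ J] exI[of _ S]) (auto simp: J_def)
qed

section \<open>Positive linear functionals are integrals\<close>

locale positive_linear_functional =
  fixes N :: "'b measure" and \<Phi> :: "('b \<Rightarrow> real) \<Rightarrow> real"
  assumes finite_N: "finite_measure N" and space_N: "space N = UNIV"
    and additive: "\<And>f g. bounded_measurable N f \<Longrightarrow> bounded_measurable N g \<Longrightarrow>
      \<Phi> (\<lambda>x. f x + g x) = \<Phi> f + \<Phi> g"
    and homogeneous: "\<And>f c. bounded_measurable N f \<Longrightarrow> \<Phi> (\<lambda>x. c * f x) = c * \<Phi> f"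
    and positive: "\<And>f. bounded_measurable N f \<Longrightarrow> (\<And>x. 0 \<le> f x) \<Longrightarrow> 0 \<le> \<Phi> f"
    and indicator_eq: "\<And>A. A \<in> sets N \<Longrightarrow> \<Phi> (indicator A) = measure N A"

sublocale positive_linear_functional \<subseteq> finite_measure N
  by (rule finite_N)

context positive_linear_functional
begin

lemma Phi_sum:
  "(\<And>i. i \<in> I \<Longrightarrow> bounded_measurable N (f i)) \<Longrightarrow> \<Phi> (\<lambda>x. \<Sum>i\<in>I. f i x) = (\<Sum>i\<in>I. \<Phi> (f i))"
proof (induction I rule: infinite_finite_induct)
  case (insert i I)
  then show ?case by (simp add: additive bounded_measurable_sum)
qed (use homogeneous[OF bounded_measurable_const, of 0 0] in simp_all)

lemma Phi_diff:
  "bounded_measurable N f \<Longrightarrow> bounded_measurable N g \<Longrightarrow> \<Phi> (\<lambda>x. f x - g x) = \<Phi> f - \<Phi> g"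
  using additive[OF _ bounded_measurable_scale, of f g "-1"] homogeneous[of g "-1"] by simp

lemma Phi_const: "\<Phi> (\<lambda>x. c) = c * measure N UNIV"
  using homogeneous[OF bounded_measurable_indicator[of UNIV], of c] indicator_eq[of UNIV] space_N
    sets.top[of N] by (simp add: indicator_def)

lemma Phi_step_function:
  assumes "finite J" "\<And>j. j \<in> J \<Longrightarrow> S j \<in> sets N"
  shows "\<Phi> (\<lambda>x. \<Sum>j\<in>J. a j * indicator (S j) x) = (\<integral>x. (\<Sum>j\<in>J. a j * indicator (S j) x) \<partial>N)"
proof -
  have "\<Phi> (\<lambda>x. \<Sum>j\<in>J. a j * indicator (S j) x) = (\<Sum>j\<in>J. \<Phi> (\<lambda>x. a j * indicator (S j) x))"
    using assms(2) by (intro Phi_sum bounded_measurable_scale bounded_measurable_indicator)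
  also have "\<dots> = (\<Sum>j\<in>J. a j * measure N (S j))"
  proof (rule sum.cong[OF refl])
    fix j assume "j \<in> J"
    then show "\<Phi> (\<lambda>x. a j * indicator (S j) x) = a j * measure N (S j)"
      using homogeneous[OF bounded_measurable_indicator[OF assms(2)]] indicator_eq[OF assms(2)]
      by presburger
  qed
  also have "\<dots> = (\<Sum>j\<in>J. \<integral>x. a j * indicator (S j) x \<partial>N)"
    using space_N by simp
  also have "\<dots> = (\<integral>x. (\<Sum>j\<in>J. a j * indicator (S j) x) \<partial>N)"
    using assms(2) by (intro Bochner_Integration.integral_sum[symmetric] integrable_bounded_measurable
        bounded_measurable_scale bounded_measurable_indicator)
  finally show ?thesis .
qed

lemma Phi_close_to_integral:
  assumes g: "bounded_measurable N g" and k: "k > 0"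
  shows "\<bar>\<Phi> g - (\<integral>x. g x \<partial>N)\<bar> \<le> measure N UNIV / k"
proof -
  obtain J S where J: "finite J" "\<And>j. j \<in> J \<Longrightarrow> S j \<in> sets N"
    and approx: "\<And>x. 0 \<le> g x - (\<Sum>j\<in>J. real_of_int j / k * indicator (S j) x)"
      "\<And>x. g x - (\<Sum>j\<in>J. real_of_int j / k * indicator (S j) x) \<le> 1 / k"
    using floor_step_approx[OF space_N g k] by blast
  define s where "s x = (\<Sum>j\<in>J. real_of_int j / k * indicator (S j) x)" for x
  have s: "bounded_measurable N s"
    unfolding s_def using J(2)
    by (intro bounded_measurable_sum bounded_measurable_scale bounded_measurable_indicator)
  have gs: "bounded_measurable N (\<lambda>x. g x - s x)" by (rule bounded_measurable_diff[OF g s])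
  have gs_bounds: "0 \<le> g x - s x" "g x - s x \<le> 1 / k" for x
    using approx[of x] unfolding s_def by auto
  have "0 \<le> \<Phi> (\<lambda>x. g x - s x)" using positive[OF gs] gs_bounds by auto
  moreover have "0 \<le> \<Phi> (\<lambda>x. 1 / k - (g x - s x))"
    using gs_bounds by (intro positive bounded_measurable_diff[OF bounded_measurable_const gs]) auto
  moreover have "0 \<le> (\<integral>x. g x - s x \<partial>N)"
    using gs_bounds by (intro Bochner_Integration.integral_nonneg) auto
  moreover have "(\<integral>x. g x - s x \<partial>N) \<le> measure N UNIV / k"
    using integral_mono[OF integrable_bounded_measurable[OF gs] integrable_const, of "1/k"]
      gs_bounds space_N by auto
  moreover have "\<Phi> s = (\<integral>x. s x \<partial>N)" unfolding s_def by (rule Phi_step_function[OF J])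
  ultimately show ?thesis
    using Phi_diff[OF g s] Phi_diff[OF bounded_measurable_const gs, of "1/k"] Phi_const[of "1/k"]
      integrable_bounded_measurable[OF g] integrable_bounded_measurable[OF s]
    by (simp add: abs_le_iff)
qed

lemma Phi_eq_integral:
  assumes g: "bounded_measurable N g" shows "\<Phi> g = (\<integral>x. g x \<partial>N)"
proof (rule ccontr)
  define D where "D = \<bar>\<Phi> g - (\<integral>x. g x \<partial>N)\<bar>"
  define C where "C = measure N UNIV"
  assume "\<Phi> g \<noteq> (\<integral>x. g x \<partial>N)"
  then have "D > 0" unfolding D_def by simp
  moreover have "C \<ge> 0" unfolding C_def by simp
  ultimately have "(C + 1) / D > 0" "C / ((C + 1) / D) < D"
    by (auto simp: field_simps)
  then show False using Phi_close_to_integral[OF g, of "(C + 1) / D"] unfolding C_def D_def by linarith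
qed

end

section \<open>Doeblin's theorem\<close>

locale doeblin_kernel =
  fixes M :: "'b measure" and K :: "'b \<Rightarrow> 'b measure" and E :: "'b measure"
  assumes space_M: "space M = UNIV"
    and kernel: "K \<in> M \<rightarrow>\<^sub>M prob_algebra M"
    and finite_E: "finite_measure E" and sets_E: "sets E = sets M"
    and minorization: "\<And>x A. emeasure E A \<le> emeasure (K x) A"
    and E_nontrivial: "0 < measure E UNIV"
begin

definition P :: "('b \<Rightarrow> real) \<Rightarrow> 'b \<Rightarrow> real" where "P f x = (\<integral>y. f y \<partial>K x)"

abbreviation eps :: real where "eps \<equiv> measure E UNIV"

lemma sets_K: "sets (K x) = sets M" and prob_space_K: "prob_space (K x)"
  using measurable_space[OF kernel, of x] space_M by (auto simp: space_prob_algebra)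

lemma space_K: "space (K x) = UNIV"
  using sets_eq_imp_space_eq[OF sets_K] space_M by simp

lemma integrable_K: "bounded_measurable M f \<Longrightarrow> integrable (K x) f"
proof -
  interpret prob_space "K x" by (rule prob_space_K)
  show "bounded_measurable M f \<Longrightarrow> integrable (K x) f"
    using integrable_bounded_measurable bounded_measurable_cong_sets[OF sets_K] by blast
qed

lemma eps_le_1: "eps \<le> 1"
proof -
  have "ennreal eps \<le> 1"
    using minorization[of UNIV undefined] prob_space.emeasure_space_1[OF prob_space_K] space_K
      finite_measure.emeasure_eq_measure[OF finite_E] by simp
  then show ?thesis by (simp add: ennreal_le_1)
qed

lemma measurable_P: "f \<in> borel_measurable M \<Longrightarrow> P f \<in> borel_measurable M"
  unfolding P_def
  by (rule measurable_compose[OF measurable_prob_algebraD[OF kernel] integral_measurable_subprob_algebra])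

lemma P_bounds:
  assumes "f \<in> borel_measurable M" "\<And>x. a \<le> f x" "\<And>x. f x \<le> b"
  shows "a \<le> P f x \<and> P f x \<le> b"
proof -
  interpret prob_space "K x" by (rule prob_space_K)
  have "integrable (K x) f" using assms by (intro integrable_K bounded_measurable_between)
  then show ?thesis
    unfolding P_def using assms by (auto intro: integral_ge_const integral_le_const)
qed

lemma bounded_measurable_P: "bounded_measurable M f \<Longrightarrow> bounded_measurable M (P f)"
proof -
  assume f: "bounded_measurable M f"
  then obtain B where B: "f \<in> borel_measurable M" "\<And>x. -B \<le> f x" "\<And>x. f x \<le> B"
    by (elim bounded_measurableE) blast
  then show ?thesis
    using P_bounds[OF B] measurable_P[OF B(1)] by (intro bounded_measurable_between) blast+
qed

lemma bounded_measurable_P_pow: "bounded_measurable M f \<Longrightarrow> bounded_measurable M ((P ^^ n) f)"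
  by (induction n) (auto intro: bounded_measurable_P)

lemma P_pow_bounds:
  assumes "f \<in> borel_measurable M" "\<And>x. a \<le> f x" "\<And>x. f x \<le> b"
  shows "a \<le> (P ^^ n) f x \<and> (P ^^ n) f x \<le> b"
proof (induction n arbitrary: x)
  case (Suc n)
  have "(P ^^ n) f \<in> borel_measurable M" using assms(1) by (induction n) (auto intro: measurable_P)
  then show ?case using P_bounds[of "(P ^^ n) f" a b x] Suc by auto
qed (use assms in auto)

lemma P_add:
  "bounded_measurable M f \<Longrightarrow> bounded_measurable M g \<Longrightarrow> P (\<lambda>x. f x + g x) y = P f y + P g y"
  unfolding P_def by (simp add: integrable_K)

lemma P_scale: "P (\<lambda>x. c * f x) y = c * P f y"
  unfolding P_def by simp

lemma P_const: "P (\<lambda>x. c) y = c"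
  unfolding P_def using prob_space.prob_space[OF prob_space_K] space_K by simp

lemma P_pow_add:
  "bounded_measurable M f \<Longrightarrow> bounded_measurable M g \<Longrightarrow>
    (P ^^ n) (\<lambda>x. f x + g x) = (\<lambda>x. (P ^^ n) f x + (P ^^ n) g x)"
  by (induction n) (auto simp: P_add bounded_measurable_P_pow)

lemma P_pow_scale: "(P ^^ n) (\<lambda>x. c * f x) = (\<lambda>x. c * (P ^^ n) f x)"
  by (induction n) (auto simp: P_scale)

lemma P_pow_const: "(P ^^ n) (\<lambda>x. c) = (\<lambda>x. c)"
  by (induction n) (auto simp: P_const)

lemma P_indicator: "A \<in> sets M \<Longrightarrow> P (indicator A) x = measure (K x) A"
  unfolding P_def using space_K by simp

lemma integral_E_le_K:
  assumes g: "bounded_measurable M g" "\<And>x. 0 \<le> g x"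
  shows "(\<integral>y. g y \<partial>E) \<le> (\<integral>y. g y \<partial>K x)"
proof -
  interpret prob_space "K x" by (rule prob_space_K)
  have g_E: "g \<in> borel_measurable E" and g_K: "g \<in> borel_measurable (K x)"
    using g(1) sets_E sets_K by (auto simp: bounded_measurable_def cong: measurable_cong_sets)
  have "E \<le> K x"
    unfolding le_measure_iff using minorization sets_E sets_K sets_eq_imp_space_eq[of E "K x"]
    by (simp add: le_fun_def)
  then have le: "(\<integral>\<^sup>+y. ennreal (g y) \<partial>E) \<le> (\<integral>\<^sup>+y. ennreal (g y) \<partial>K x)"
    by (intro nn_integral_mono_measure) (use sets_E sets_K in simp_all)
  have "(\<integral>\<^sup>+y. ennreal (g y) \<partial>K x) < top"
    using integrable_K[OF g(1)] g(2) by (simp add: integrable_iff_bounded less_top[symmetric])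
  then show ?thesis
    using le g g_E g_K by (simp add: integral_eq_nn_integral enn2real_mono)
qed

lemma P_oscillation_contracts:
  assumes f: "f \<in> borel_measurable M" "\<And>x. a \<le> f x" "\<And>x. f x \<le> b"
  shows "\<exists>a'. \<forall>x. a' \<le> P f x \<and> P f x \<le> a' + (1 - eps) * (b - a)"
proof -
  interpret E: finite_measure E by (rule finite_E)
  have bm: "bounded_measurable M f" using f by (rule bounded_measurable_between)
  have above: "bounded_measurable M (\<lambda>y. f y - a)" and below: "bounded_measurable M (\<lambda>y. b - f y)"
    by (intro bounded_measurable_diff bm bounded_measurable_const)+
  have int_E: "integrable E h" if "bounded_measurable M h" for h
    using E.integrable_bounded_measurable bounded_measurable_cong_sets[OF sets_E] that by blast
  have space_E: "space E = UNIV" using sets_eq_imp_space_eq[OF sets_E] space_M by simp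
  define a' where "a' = a + (\<integral>y. f y - a \<partial>E)"
  have width: "(\<integral>y. f y - a \<partial>E) + (\<integral>y. b - f y \<partial>E) = (b - a) * eps"
    using int_E[OF above] int_E[OF below] space_E by (simp flip: Bochner_Integration.integral_add)
  have "a' \<le> P f x \<and> P f x \<le> a' + (1 - eps) * (b - a)" for x
  proof -
    have "(\<integral>y. f y - a \<partial>E) \<le> P (\<lambda>y. f y - a) x" "(\<integral>y. b - f y \<partial>E) \<le> P (\<lambda>y. b - f y) x"
      unfolding P_def using f by (auto intro!: integral_E_le_K above below)
    moreover have "P (\<lambda>y. f y - a) x = P f x - a" "P (\<lambda>y. b - f y) x = b - P f x"
      using P_add[OF bm bounded_measurable_const, of "-a" x] P_const[of _ x]
        P_add[OF bounded_measurable_const bounded_measurable_scale[OF bm], of b "-1" x]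
        P_scale[of "-1" f x]
      by auto
    ultimately show ?thesis unfolding a'_def using width by (simp add: algebra_simps)
  qed
  then show ?thesis by blast
qed

lemma P_pow_oscillation:
  assumes "f \<in> borel_measurable M" "\<And>x. a \<le> f x" "\<And>x. f x \<le> b"
  shows "\<exists>a'. \<forall>m\<ge>n. \<forall>x. a' \<le> (P ^^ m) f x \<and> (P ^^ m) f x \<le> a' + (1 - eps) ^ n * (b - a)"
  using assms
proof (induction n arbitrary: f a b)
  case 0
  then show ?case by (intro exI[of _ a]) (use P_pow_bounds[OF 0] in auto)
next
  case (Suc n)
  obtain a' where a': "\<And>x. a' \<le> P f x" "\<And>x. P f x \<le> a' + (1 - eps) * (b - a)"
    using P_oscillation_contracts[OF Suc.prems] by blast
  obtain a'' where a'': "\<forall>m\<ge>n. \<forall>x. a'' \<le> (P ^^ m) (P f) x \<and>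
      (P ^^ m) (P f) x \<le> a'' + (1 - eps) ^ n * (a' + (1 - eps) * (b - a) - a')"
    using Suc.IH[OF measurable_P[OF Suc.prems(1)] a'] by blast
  show ?case
  proof (intro exI[of _ a''] allI impI)
    fix m x assume "Suc n \<le> m"
    then have "(P ^^ m) f = (P ^^ (m - 1)) (P f)" "n \<le> m - 1"
      by (metis Suc_le_D diff_Suc_1 funpow_Suc_right o_apply, linarith)
    moreover have "(1 - eps) ^ n * (a' + (1 - eps) * (b - a) - a') = (1 - eps) ^ Suc n * (b - a)"
      by simp
    ultimately show "a'' \<le> (P ^^ m) f x \<and> (P ^^ m) f x \<le> a'' + (1 - eps) ^ Suc n * (b - a)"
      using a''[rule_format, of "m - 1" x] by (simp add: mult_ac)
  qed
qed

lemma contraction_tendsto_zero: "(\<lambda>n. (1 - eps) ^ n * c) \<longlonglongrightarrow> 0"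
  using E_nontrivial eps_le_1 by (intro tendsto_mult_left_zero LIMSEQ_power_zero) auto

lemma P_pow_dist:
  assumes "g \<in> borel_measurable M" "\<And>x. a \<le> g x" "\<And>x. g x \<le> b" "m \<ge> n" "m' \<ge> n"
  shows "\<bar>(P ^^ m) g x - (P ^^ m') g y\<bar> \<le> (1 - eps) ^ n * (b - a)"
proof -
  obtain a' where "\<forall>m\<ge>n. \<forall>x. a' \<le> (P ^^ m) g x \<and> (P ^^ m) g x \<le> a' + (1 - eps) ^ n * (b - a)"
    using P_pow_oscillation[OF assms(1-3), of n] by blast
  then have "a' \<le> (P ^^ m) g x" "(P ^^ m) g x \<le> a' + (1 - eps) ^ n * (b - a)"
    "a' \<le> (P ^^ m') g y" "(P ^^ m') g y \<le> a' + (1 - eps) ^ n * (b - a)"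
    using assms(4,5) by blast+
  then show ?thesis unfolding abs_le_iff by linarith
qed

text \<open>The limit does not depend on the starting point, which is therefore chosen arbitrarily.\<close>
definition limit_mean :: "('b \<Rightarrow> real) \<Rightarrow> real" where
  "limit_mean g = lim (\<lambda>n. (P ^^ n) g undefined)"

lemma LIMSEQ_limit_mean:
  assumes g: "g \<in> borel_measurable M" "\<And>x. a \<le> g x" "\<And>x. g x \<le> b"
  shows "(\<lambda>n. (P ^^ n) g undefined) \<longlonglongrightarrow> limit_mean g"
proof -
  have "Cauchy (\<lambda>n. (P ^^ n) g undefined)"
  proof (rule metric_CauchyI)
    fix e :: real assume "0 < e"
    then obtain N where "\<forall>n\<ge>N. norm ((1 - eps) ^ n * (b - a) - 0) < e"
      using LIMSEQ_D[OF contraction_tendsto_zero] by blast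
    then have N: "(1 - eps) ^ N * (b - a) < e" by auto
    show "\<exists>N. \<forall>m\<ge>N. \<forall>n\<ge>N. dist ((P ^^ m) g undefined) ((P ^^ n) g undefined) < e"
    proof (intro exI[of _ N] allI impI)
      fix m n assume "N \<le> m" "N \<le> n"
      then have "\<bar>(P ^^ m) g undefined - (P ^^ n) g undefined\<bar> \<le> (1 - eps) ^ N * (b - a)"
        by (rule P_pow_dist[OF g])
      then show "dist ((P ^^ m) g undefined) ((P ^^ n) g undefined) < e"
        using N by (simp add: dist_real_def)
    qed
  qed
  then show ?thesis
    unfolding limit_mean_def by (simp add: Cauchy_convergent_iff convergent_LIMSEQ_iff)
qed

lemma P_pow_limit_mean:
  assumes g: "g \<in> borel_measurable M" "\<And>x. a \<le> g x" "\<And>x. g x \<le> b"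
  shows "\<bar>(P ^^ n) g x - limit_mean g\<bar> \<le> (1 - eps) ^ n * (b - a)"
    and "(\<lambda>n. (P ^^ n) g x) \<longlonglongrightarrow> limit_mean g"
proof -
  show bound: "\<bar>(P ^^ n) g x - limit_mean g\<bar> \<le> (1 - eps) ^ n * (b - a)" for n x
    using LIMSEQ_limit_mean[OF g]
    by (intro LIMSEQ_le_const2[OF tendsto_rabs[OF tendsto_diff[OF tendsto_const]]])
      (auto intro!: exI[of _ n] P_pow_dist[OF g])
  have "(\<lambda>n. (P ^^ n) g x - limit_mean g) \<longlonglongrightarrow> 0"
    by (rule Lim_null_comparison[OF _ contraction_tendsto_zero[of "b - a"]]) (use bound in auto)
  then show "(\<lambda>n. (P ^^ n) g x) \<longlonglongrightarrow> limit_mean g" by (rule LIM_zero_cancel)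
qed

lemma P_pow_tendsto_limit_mean:
  "bounded_measurable M g \<Longrightarrow> (\<lambda>n. (P ^^ n) g x) \<longlonglongrightarrow> limit_mean g"
  by (elim bounded_measurableE) (rule P_pow_limit_mean(2))

lemma limit_mean_add:
  assumes "bounded_measurable M f" "bounded_measurable M g"
  shows "limit_mean (\<lambda>x. f x + g x) = limit_mean f + limit_mean g"
  using P_pow_tendsto_limit_mean[OF bounded_measurable_add[OF assms], of undefined]
    tendsto_add[OF P_pow_tendsto_limit_mean[OF assms(1)] P_pow_tendsto_limit_mean[OF assms(2)]]
  by (simp add: P_pow_add[OF assms] LIMSEQ_unique)

lemma limit_mean_scale:
  assumes "bounded_measurable M f" shows "limit_mean (\<lambda>x. c * f x) = c * limit_mean f"
  using P_pow_tendsto_limit_mean[OF bounded_measurable_scale[OF assms, where c=c], of undefined]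
    tendsto_mult_left[OF P_pow_tendsto_limit_mean[OF assms], of c]
  by (simp add: P_pow_scale LIMSEQ_unique)

lemma limit_mean_const: "limit_mean (\<lambda>x. c) = c"
  using P_pow_tendsto_limit_mean[OF bounded_measurable_const, of c undefined]
  by (simp add: P_pow_const LIMSEQ_const_iff)

lemma limit_mean_nonneg:
  assumes "bounded_measurable M f" "\<And>x. 0 \<le> f x" shows "0 \<le> limit_mean f"
proof -
  obtain B where "\<And>x. f x \<le> B" using assms(1) by (elim bounded_measurableE) blast
  then have "0 \<le> (P ^^ n) f x" for n x
    using P_pow_bounds[OF bounded_measurable_measurable[OF assms(1)] assms(2)] by blast
  then show ?thesis
    by (intro LIMSEQ_le_const[OF P_pow_tendsto_limit_mean[OF assms(1), of undefined]]) auto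
qed

lemma limit_mean_P: "bounded_measurable M f \<Longrightarrow> limit_mean (P f) = limit_mean f"
  using P_pow_tendsto_limit_mean[of "P f" undefined] LIMSEQ_Suc[OF P_pow_tendsto_limit_mean[of f undefined]]
  by (simp add: bounded_measurable_P funpow_Suc_right LIMSEQ_unique del: funpow.simps)

lemma P_tendsto_zero:
  assumes "\<And>i. g i \<in> borel_measurable M" "\<And>i x. \<bar>g i x\<bar> \<le> B" "\<And>x. (\<lambda>i. g i x) \<longlonglongrightarrow> 0"
  shows "(\<lambda>i. P (g i) x) \<longlonglongrightarrow> 0"
proof -
  interpret prob_space "K x" by (rule prob_space_K)
  have "(\<lambda>i. \<integral>y. g i y \<partial>K x) \<longlonglongrightarrow> (\<integral>y. 0 \<partial>K x)"
    using assms measurable_cong_sets[OF sets_K[of x] refl, of borel]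
    by (intro integral_dominated_convergence[where w="\<lambda>_. B"]) auto
  then show ?thesis unfolding P_def by simp
qed

lemma P_pow_tendsto_zero:
  assumes "\<And>i. g i \<in> borel_measurable M" "\<And>i x. \<bar>g i x\<bar> \<le> B" "\<And>x. (\<lambda>i. g i x) \<longlonglongrightarrow> 0"
  shows "(\<lambda>i. (P ^^ n) (g i) x) \<longlonglongrightarrow> 0"
proof (induction n arbitrary: x)
  case (Suc n)
  have "\<bar>(P ^^ n) (g i) y\<bar> \<le> B" for i y
  proof -
    have "-B \<le> g i x" "g i x \<le> B" for x using assms(2)[of i x] by (auto simp: abs_le_iff)
    then show ?thesis using P_pow_bounds[OF assms(1)[of i], of "-B" B n y] by (auto simp: abs_le_iff)
  qed
  moreover have "(P ^^ n) (g i) \<in> borel_measurable M" for i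
    using assms(1)[of i] by (induction n) (auto intro: measurable_P)
  ultimately show ?case using P_tendsto_zero[of "\<lambda>i. (P ^^ n) (g i)" B] Suc by simp
qed (use assms in simp)

lemma limit_mean_indicator_le:
  "A \<in> sets M \<Longrightarrow> limit_mean (indicator A) \<le> (P ^^ n) (indicator A) x + (1 - eps) ^ n"
  using P_pow_limit_mean(1)[of "indicator A" 0 1 n x] by (auto simp: indicator_def abs_le_iff)

lemma limit_mean_indicator_continuous:
  assumes A: "range A \<subseteq> sets M" "decseq A" "(\<Inter>i. A i) = {}"
  shows "(\<lambda>i. limit_mean (indicator (A i))) \<longlonglongrightarrow> 0"
proof (rule order_tendstoI)
  fix r :: real assume "r < 0"
  then show "\<forall>\<^sub>F i in sequentially. r < limit_mean (indicator (A i))"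
    using A(1) limit_mean_nonneg[OF bounded_measurable_indicator]
    by (intro always_eventually allI) (auto intro: less_le_trans)
next
  fix r :: real assume "0 < r"
  then obtain N where "\<forall>n\<ge>N. norm ((1 - eps) ^ n * 1 - 0) < r / 2"
    using LIMSEQ_D[OF contraction_tendsto_zero, of "r / 2"] by fastforce
  then have N: "(1 - eps) ^ N < r / 2" by auto
  have "(\<lambda>i. indicator (A i) x :: real) \<longlonglongrightarrow> 0" for x
  proof (rule tendsto_eventually)
    obtain i0 where "x \<notin> A i0" using A(3) by blast
    then show "\<forall>\<^sub>F i in sequentially. indicator (A i) x = (0::real)"
      using A(2) by (auto simp: eventually_sequentially decseq_def indicator_def)
  qed
  then have "(\<lambda>i. (P ^^ N) (indicator (A i)) undefined) \<longlonglongrightarrow> 0"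
    using A(1) by (intro P_pow_tendsto_zero[where B=1]) (auto simp: indicator_def)
  then have "\<forall>\<^sub>F i in sequentially. (P ^^ N) (indicator (A i)) undefined < r / 2"
    using \<open>0 < r\<close> by (intro order_tendstoD) auto
  then show "\<forall>\<^sub>F i in sequentially. limit_mean (indicator (A i)) < r"
  proof eventually_elim
    case (elim i)
    then show ?case
      using limit_mean_indicator_le[of "A i" N undefined] A(1) N by auto
  qed
qed

definition stationary :: "'b measure" where
  "stationary = measure_of UNIV (sets M) (\<lambda>A. ennreal (limit_mean (indicator A)))"

lemma sigma_algebra_M: "sigma_algebra UNIV (sets M)"
  using sets.sigma_algebra_axioms[of M] space_M by simp

lemma sets_stationary: "sets stationary = sets M"
  unfolding stationary_def using sigma_algebra.sets_measure_of_eq[OF sigma_algebra_M] by blast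

lemma space_stationary: "space stationary = UNIV"
  unfolding stationary_def using sigma_algebra.space_measure_of_eq[OF sigma_algebra_M] by blast

lemma emeasure_stationary:
  assumes "A \<in> sets M" shows "emeasure stationary A = ennreal (limit_mean (indicator A))"
  unfolding stationary_def
proof (rule emeasure_measure_of_sigma[OF sigma_algebra_M _ _ assms])
  interpret sigma_algebra UNIV "sets M" by (rule sigma_algebra_M)
  show positive: "positive (sets M) (\<lambda>A. ennreal (limit_mean (indicator A)))"
  proof -
    have "(indicator {} :: 'b \<Rightarrow> real) = (\<lambda>x. 0)" by (rule ext) simp
    then show ?thesis using limit_mean_const[of 0] by (simp add: positive_def)
  qed
  have "additive (sets M) (\<lambda>A. ennreal (limit_mean (indicator A)))"
  proof (unfold additive_def, intro ballI impI)
    fix X Y assume XY: "X \<in> sets M" "Y \<in> sets M" "X \<inter> Y = {}"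
    have "indicator (X \<union> Y) = (\<lambda>x. indicator X x + indicator Y x :: real)"
      using indicator_disj_union[OF XY(3)] by (rule ext)
    then have "limit_mean (indicator (X \<union> Y)) = limit_mean (indicator X) + limit_mean (indicator Y)"
      using limit_mean_add[OF bounded_measurable_indicator[OF XY(1)] bounded_measurable_indicator[OF XY(2)]]
      by simp
    then show "ennreal (limit_mean (indicator (X \<union> Y))) =
        ennreal (limit_mean (indicator X)) + ennreal (limit_mean (indicator Y))"
      using XY by (simp add: ennreal_plus limit_mean_nonneg bounded_measurable_indicator)
  qed
  then show "countably_additive (sets M) (\<lambda>A. ennreal (limit_mean (indicator A)))"
    using limit_mean_indicator_continuous
    by (intro empty_continuous_imp_countably_additive[OF positive])
      (auto simp flip: ennreal_0 intro!: tendsto_ennrealI)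
qed

lemma measure_stationary: "A \<in> sets M \<Longrightarrow> measure stationary A = limit_mean (indicator A)"
  using emeasure_stationary limit_mean_nonneg[OF bounded_measurable_indicator]
  by (simp add: measure_def)

lemma prob_space_stationary: "prob_space stationary"
proof
  have "emeasure stationary UNIV = ennreal (limit_mean (\<lambda>x. 1))"
    using emeasure_stationary[of UNIV] space_M sets.top[of M] by simp
  then show "emeasure stationary (space stationary) = 1"
    using limit_mean_const[of 1] space_stationary by simp
qed

lemma positive_linear_functional_limit_mean: "positive_linear_functional stationary limit_mean"
proof (rule positive_linear_functional.intro)
  show "finite_measure stationary"
    using prob_space_stationary by (simp add: prob_space_def)
  show "space stationary = UNIV" by (rule space_stationary)
qed (simp_all add: bounded_measurable_cong_sets[OF sets_stationary] sets_stationary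
      limit_mean_add limit_mean_scale limit_mean_nonneg measure_stationary)

lemma integral_stationary:
  "bounded_measurable M g \<Longrightarrow> (\<integral>x. g x \<partial>stationary) = limit_mean g"
  using positive_linear_functional.Phi_eq_integral[OF positive_linear_functional_limit_mean]
  by (simp add: bounded_measurable_cong_sets[OF sets_stationary])

lemma stationary_invariant:
  assumes "A \<in> sets M" shows "measure stationary A = (\<integral>x. measure (K x) A \<partial>stationary)"
  using assms
  by (simp add: measure_stationary integral_stationary bounded_measurable_P bounded_measurable_indicator
      limit_mean_P flip: P_indicator)

lemma positive_linear_functional_integral_P:
  assumes N: "prob_space N" "sets N = sets M"
    and invariant: "\<And>A. A \<in> sets M \<Longrightarrow> measure N A = (\<integral>x. measure (K x) A \<partial>N)"
  shows "positive_linear_functional N (\<lambda>h. \<integral>x. P h x \<partial>N)"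
proof (rule positive_linear_functional.intro)
  interpret prob_space N by (rule N(1))
  have bm_N: "bounded_measurable N f = bounded_measurable M f" for f
    by (rule bounded_measurable_cong_sets[OF N(2)])
  show "finite_measure N" by unfold_locales
  show "space N = UNIV" using sets_eq_imp_space_eq[OF N(2)] space_M by simp
  fix f g c assume f: "bounded_measurable N f"
  then show "(\<integral>x. P (\<lambda>x. c * f x) x \<partial>N) = c * (\<integral>x. P f x \<partial>N)" by (simp add: P_scale)
  show "(\<And>x. 0 \<le> f x) \<Longrightarrow> 0 \<le> (\<integral>x. P f x \<partial>N)"
    using f bm_N P_bounds[of f 0] by (fastforce elim: bounded_measurableE intro: Bochner_Integration.integral_nonneg)
  assume g: "bounded_measurable N g"
  show "(\<integral>x. P (\<lambda>x. f x + g x) x \<partial>N) = (\<integral>x. P f x \<partial>N) + (\<integral>x. P g x \<partial>N)"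
    using f g bm_N by (simp add: P_add integrable_bounded_measurable bounded_measurable_P)
next
  fix A assume "A \<in> sets N"
  then show "(\<integral>x. P (indicator A) x \<partial>N) = measure N A"
    using N(2) invariant by (simp add: P_indicator)
qed

lemma integral_P_of_invariant:
  assumes N: "prob_space N" "sets N = sets M"
    and invariant: "\<And>A. A \<in> sets M \<Longrightarrow> measure N A = (\<integral>x. measure (K x) A \<partial>N)"
    and h: "bounded_measurable M h"
  shows "(\<integral>x. P h x \<partial>N) = (\<integral>x. h x \<partial>N)"
  using positive_linear_functional.Phi_eq_integral[OF positive_linear_functional_integral_P[OF N invariant]]
    h bounded_measurable_cong_sets[OF N(2)] by simp

lemma integral_invariant_eq_limit_mean:
  assumes N: "prob_space N" "sets N = sets M"
    and invariant: "\<And>A. A \<in> sets M \<Longrightarrow> measure N A = (\<integral>x. measure (K x) A \<partial>N)"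
    and h: "bounded_measurable M h"
  shows "(\<integral>x. h x \<partial>N) = limit_mean h"
proof -
  interpret prob_space N by (rule N(1))
  obtain B where B: "\<And>x. -B \<le> h x" "\<And>x. h x \<le> B" using h by (elim bounded_measurableE) blast
  have "(\<integral>x. (P ^^ n) h x \<partial>N) = (\<integral>x. h x \<partial>N)" for n
    by (induction n) (simp_all add: integral_P_of_invariant[OF N invariant] bounded_measurable_P_pow h)
  moreover have "(\<lambda>n. \<integral>x. (P ^^ n) h x \<partial>N) \<longlonglongrightarrow> (\<integral>x. limit_mean h \<partial>N)"
  proof (rule integral_dominated_convergence[where w="\<lambda>_. B"])
    show "AE x in N. (\<lambda>n. (P ^^ n) h x) \<longlonglongrightarrow> limit_mean h"
      using P_pow_tendsto_limit_mean[OF h] by simp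
    show "AE x in N. norm ((P ^^ n) h x) \<le> B" for n
    proof (rule AE_I2)
      fix x show "norm ((P ^^ n) h x) \<le> B"
        using P_pow_bounds[OF bounded_measurable_measurable[OF h] B, of n x]
        unfolding real_norm_def abs_le_iff by linarith
    qed
    show "(P ^^ n) h \<in> borel_measurable N" for n
      using bounded_measurable_P_pow[OF h] N(2) by (simp add: bounded_measurable_def cong: measurable_cong_sets)
  qed simp_all
  ultimately show ?thesis by (simp add: LIMSEQ_const_iff prob_space)
qed

lemma invariant_measure_unique:
  assumes N: "prob_space N" "sets N = sets M"
    and invariant: "\<And>A. A \<in> sets M \<Longrightarrow> measure N A = (\<integral>x. measure (K x) A \<partial>N)"
  shows "N = stationary"
proof -
  interpret prob_space N by (rule N(1))
  have "measure N A = measure stationary A" if "A \<in> sets M" for A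
  proof -
    have "measure N A = (\<integral>x. indicator A x \<partial>N)"
      using sets_eq_imp_space_eq[OF N(2)] space_M by simp
    also have "\<dots> = limit_mean (indicator A)"
      by (rule integral_invariant_eq_limit_mean[OF N invariant bounded_measurable_indicator[OF that]])
    finally show ?thesis by (simp add: measure_stationary that)
  qed
  then show ?thesis
    using N(2) sets_stationary
    by (intro measure_eqI) (simp_all add: emeasure_eq_measure emeasure_stationary measure_stationary)
qed

lemma stationary_convergence:
  assumes "f \<in> borel_measurable M" "\<And>x. a \<le> f x" "\<And>x. f x \<le> b"
  shows "\<bar>(P ^^ n) f x - (\<integral>y. f y \<partial>stationary)\<bar> \<le> (1 - eps) ^ n * (b - a)"
proof -
  have "bounded_measurable M f" using assms by (rule bounded_measurable_between)
  then show ?thesis using P_pow_limit_mean(1)[OF assms] by (simp add: integral_stationary)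
qed

end

section \<open>The coupled independence sampler\<close>

lemma ennreal_suminf_add: "(\<Sum>i. f i + g i :: ennreal) = (\<Sum>i. f i) + (\<Sum>i. g i)"
  by (simp add: suminf_add[OF summableI summableI])

lemma alpha_bounds:
  assumes "ppi j z > 0" "ppi j t > 0" "Q l z > 0" "Q l t > 0"
  shows "0 \<le> alpha ppi Q l j t z" "alpha ppi Q l j t z \<le> 1"
  using assms unfolding alpha_def by (simp_all add: min_le_iff_disj)

lemma alpha_lower_bound:
  assumes "ppi j z > 0" "ppi j t > 0" "Q l z > 0" "Q l t > 0" "c \<le> Q l t / ppi j t"
  shows "min (Q l z) (c * ppi j z) \<le> Q l z * alpha ppi Q l j t z"
proof -
  have "Q l z * alpha ppi Q l j t z = min (Q l z) (ppi j z * (Q l t / ppi j t))"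
    using assms(1-4) unfolding alpha_def by (simp add: min_mult_distrib_left field_simps)
  moreover have "c * ppi j z \<le> ppi j z * (Q l t / ppi j t)"
    using mult_right_mono[OF assms(5), of "ppi j z"] assms(1) by (simp add: mult.commute)
  ultimately show ?thesis by simp
qed

lemma positive_lower_bound_of_compact_sublevels:
  fixes g :: "'a::topological_space \<Rightarrow> real"
  assumes "continuous_on UNIV g" "\<And>x. g x > 0" "\<And>r. r > 0 \<Longrightarrow> compact {x. g x \<le> r}"
  shows "\<exists>c>0. \<forall>x. c \<le> g x"
proof -
  define S where "S = {x. g x \<le> g undefined}"
  have "compact S" unfolding S_def by (rule assms(3)[OF assms(2)])
  moreover have "S \<noteq> {}" unfolding S_def by auto
  moreover have "continuous_on S g" using assms(1) by (rule continuous_on_subset) simp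
  ultimately obtain x0 where x0: "x0 \<in> S" "\<And>y. y \<in> S \<Longrightarrow> g x0 \<le> g y"
    by (metis continuous_attains_inf)
  have "g x0 \<le> g y" for y
  proof (cases "y \<in> S")
    case False
    then show ?thesis using x0(2)[of undefined] unfolding S_def by simp
  qed (rule x0(2))
  then show ?thesis using assms(2)[of x0] by blast
qed

locale coupled_sampler =
  fixes mu :: "'a::second_countable_topology measure"
    and ppi Q :: "nat \<Rightarrow> 'a \<Rightarrow> real" and l :: nat and c :: real
  assumes prob_space_mu: "prob_space mu" and sets_mu: "sets mu = sets borel"
    and integrable_Q: "integrable mu (Q l)" and integral_Q: "(\<integral>x. Q l x \<partial>mu) = 1"
    and continuous_Q: "continuous_on UNIV (Q l)" and Q_pos: "\<And>z. Q l z > 0"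
    and continuous_ppi: "\<And>j. j \<in> {l - 1, l} \<Longrightarrow> continuous_on UNIV (ppi j)"
    and ppi_pos: "\<And>j z. j \<in> {l - 1, l} \<Longrightarrow> ppi j z > 0"
    and c_pos: "c > 0" and ratio_lower_bound: "\<And>j x. j \<in> {l - 1, l} \<Longrightarrow> c \<le> Q l x / ppi j x"
begin

lemma measurable_Q[measurable]: "Q l \<in> borel_measurable borel"
  by (rule borel_measurable_continuous_onI[OF continuous_Q])

lemma measurable_ppi[measurable]:
  "ppi (l - 1) \<in> borel_measurable borel" "ppi l \<in> borel_measurable borel"
  by (rule borel_measurable_continuous_onI, rule continuous_ppi, simp)+

lemma space_mu: "space mu = UNIV"
  using sets_eq_imp_space_eq[OF sets_mu] by simp

lemma measurable_mu_iff: "f \<in> borel_measurable mu \<longleftrightarrow> f \<in> borel_measurable borel"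
  using measurable_cong_sets[OF sets_mu refl] by blast

lemma sets_borel_pair: "sets (borel :: ('a \<times> 'a) measure) = sets (borel \<Otimes>\<^sub>M borel)"
  by (metis borel_prod)

definition acc_prev :: "'a \<times> 'a \<Rightarrow> 'a \<Rightarrow> real" where
  "acc_prev th z = alpha ppi Q l (l - 1) (fst th) z"

definition acc_cur :: "'a \<times> 'a \<Rightarrow> 'a \<Rightarrow> real" where
  "acc_cur th z = alpha ppi Q l l (snd th) z"

lemma acc_bounds:
  "0 \<le> acc_prev th z" "acc_prev th z \<le> 1" "0 \<le> acc_cur th z" "acc_cur th z \<le> 1"
proof -
  have "0 \<le> alpha ppi Q l j t z \<and> alpha ppi Q l j t z \<le> 1" if "j \<in> {l - 1, l}" for j t
    using that by (simp add: alpha_bounds ppi_pos Q_pos)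
  then show "0 \<le> acc_prev th z" "acc_prev th z \<le> 1" "0 \<le> acc_cur th z" "acc_cur th z \<le> 1"
    unfolding acc_prev_def acc_cur_def by auto
qed

lemma acc_lower_bound:
  "min (Q l z) (c * ppi (l - 1) z) \<le> Q l z * acc_prev th z"
  "min (Q l z) (c * ppi l z) \<le> Q l z * acc_cur th z"
  unfolding acc_prev_def acc_cur_def
  by (rule alpha_lower_bound; simp add: ppi_pos Q_pos ratio_lower_bound)+

lemma measurable_acc[measurable]:
  "acc_prev th \<in> borel_measurable borel" "acc_cur th \<in> borel_measurable borel"
  unfolding acc_prev_def acc_cur_def alpha_def by measurable

text \<open>Given the proposal \<open>z\<close>: both chains accept, only the first accepts, only the second
  accepts, or both reject.\<close>
definition move_prob :: "'a \<times> 'a \<Rightarrow> 'a \<Rightarrow> ('a \<times> 'a) set \<Rightarrow> real" where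
  "move_prob th z A =
     min (acc_prev th z) (acc_cur th z) * indicator A (z, z)
   + max 0 (acc_prev th z - acc_cur th z) * indicator A (z, snd th)
   + max 0 (acc_cur th z - acc_prev th z) * indicator A (fst th, z)
   + (1 - max (acc_prev th z) (acc_cur th z)) * indicator A th"

lemma move_prob_nonneg: "0 \<le> move_prob th z A"
  unfolding move_prob_def using acc_bounds[of th z]
  by (intro add_nonneg_nonneg mult_nonneg_nonneg) auto

lemma move_prob_UNIV: "move_prob th z UNIV = 1"
  unfolding move_prob_def by (simp add: min_def max_def)

lemma move_prob_le_1: "move_prob th z A \<le> 1"
proof -
  have "move_prob th z A \<le> move_prob th z UNIV"
    unfolding move_prob_def using acc_bounds[of th z]
    by (intro add_mono mult_left_mono) (auto simp: indicator_def)
  then show ?thesis using move_prob_UNIV by simp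
qed

lemma measurable_move_prob:
  assumes "A \<in> sets borel"
  shows "(\<lambda>(th, z). move_prob th z A) \<in> borel_measurable (borel \<Otimes>\<^sub>M borel)"
proof -
  have [measurable]: "A \<in> sets (borel \<Otimes>\<^sub>M borel)" using assms sets_borel_pair by simp
  have "(\<lambda>x. move_prob (fst x) (snd x) A) \<in> borel_measurable ((borel \<Otimes>\<^sub>M borel) \<Otimes>\<^sub>M borel)"
    unfolding move_prob_def acc_prev_def acc_cur_def alpha_def by measurable
  then show ?thesis
    using sets_borel_pair by (simp add: case_prod_beta' cong: measurable_cong_sets)
qed

abbreviation kern :: "'a \<times> 'a \<Rightarrow> ('a \<times> 'a) set \<Rightarrow> real" where
  "kern \<equiv> joint_kernel mu ppi Q l"

abbreviation kern_measure :: "'a \<times> 'a \<Rightarrow> ('a \<times> 'a) measure" where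
  "kern_measure \<equiv> joint_kernel_measure mu ppi Q l"

lemma integrable_times_Q:
  assumes "f \<in> borel_measurable borel" "\<And>z. \<bar>f z\<bar> \<le> 1"
  shows "integrable mu (\<lambda>z. f z * Q l z)"
proof (rule Bochner_Integration.integrable_bound[OF integrable_Q])
  show "(\<lambda>z. f z * Q l z) \<in> borel_measurable mu" using assms(1) by (simp add: measurable_mu_iff)
  show "AE z in mu. norm (f z * Q l z) \<le> norm (Q l z)"
    using assms(2) by (intro AE_I2) (metis abs_ge_zero abs_mult mult_left_le_one_le real_norm_def)
qed

lemma kern_eq_integral:
  assumes A: "A \<in> sets borel"
  shows "kern th A = (\<integral>z. Q l z * move_prob th z A \<partial>mu)"
proof -
  have [measurable]: "A \<in> sets (borel \<Otimes>\<^sub>M borel)" using A sets_borel_pair by simp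
  have acc: "\<bar>min (acc_prev th z) (acc_cur th z)\<bar> \<le> 1" "\<bar>max (acc_prev th z) (acc_cur th z)\<bar> \<le> 1"
    "\<bar>max 0 (acc_prev th z - acc_cur th z)\<bar> \<le> 1" "\<bar>max 0 (acc_cur th z - acc_prev th z)\<bar> \<le> 1" for z
    using acc_bounds[of th z] by auto
  define both where "both z = min (acc_prev th z) (acc_cur th z) * indicator A (z, z) * Q l z" for z
  define prev where "prev z = max 0 (acc_prev th z - acc_cur th z) * indicator A (z, snd th) * Q l z" for z
  define cur where "cur z = max 0 (acc_cur th z - acc_prev th z) * indicator A (fst th, z) * Q l z" for z
  define any where "any z = max (acc_prev th z) (acc_cur th z) * Q l z" for z
  have "integrable mu both" unfolding both_def
    by (rule integrable_times_Q, measurable) (use acc in \<open>auto simp: indicator_def\<close>)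
  moreover have "integrable mu prev" unfolding prev_def
    by (rule integrable_times_Q, measurable) (use acc in \<open>auto simp: indicator_def\<close>)
  moreover have "integrable mu cur" unfolding cur_def
    by (rule integrable_times_Q, measurable) (use acc in \<open>auto simp: indicator_def\<close>)
  moreover have "integrable mu any" unfolding any_def
    by (rule integrable_times_Q, measurable) (use acc in auto)
  moreover have "Q l z * move_prob th z A = both z + prev z + cur z + indicator A th * (Q l z - any z)" for z
    unfolding move_prob_def both_def prev_def cur_def any_def by (simp add: algebra_simps)
  ultimately have "(\<integral>z. Q l z * move_prob th z A \<partial>mu) =
      (\<integral>z. both z \<partial>mu) + (\<integral>z. prev z \<partial>mu) + (\<integral>z. cur z \<partial>mu) + indicator A th * (1 - (\<integral>z. any z \<partial>mu))"
    using integrable_Q integral_Q by (simp add: Bochner_Integration.integral_add Bochner_Integration.integral_diff)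
  also have "\<dots> = kern th A"
    unfolding joint_kernel_def both_def prev_def cur_def any_def acc_prev_def acc_cur_def ..
  finally show ?thesis ..
qed

lemma kern_nn_integral:
  assumes "A \<in> sets borel"
  shows "ennreal (kern th A) = (\<integral>\<^sup>+z. ennreal (Q l z * move_prob th z A) \<partial>mu)"
proof -
  have "integrable mu (\<lambda>z. move_prob th z A * Q l z)"
    using measurable_move_prob[OF assms] move_prob_nonneg[of th _ A] move_prob_le_1[of th _ A]
    by (intro integrable_times_Q) (auto simp: measurable_pair_iff)
  then show ?thesis
    unfolding kern_eq_integral[OF assms] using Q_pos move_prob_nonneg
    by (intro nn_integral_eq_integral[symmetric]) (auto simp: mult.commute less_imp_le)
qed

lemma ennreal_move_prob_suminf:
  assumes "disjoint_family F"
  shows "(\<Sum>i. ennreal (Q l z * move_prob th z (F i))) = ennreal (Q l z * move_prob th z (\<Union>i. F i))"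
proof -
  have split: "ennreal (Q l z * move_prob th z A) =
       ennreal (Q l z * min (acc_prev th z) (acc_cur th z)) * indicator A (z, z)
     + ennreal (Q l z * max 0 (acc_prev th z - acc_cur th z)) * indicator A (z, snd th)
     + ennreal (Q l z * max 0 (acc_cur th z - acc_prev th z)) * indicator A (fst th, z)
     + ennreal (Q l z * (1 - max (acc_prev th z) (acc_cur th z))) * indicator A th" for A
  proof -
    define c1 where "c1 = Q l z * min (acc_prev th z) (acc_cur th z)"
    define c2 where "c2 = Q l z * max 0 (acc_prev th z - acc_cur th z)"
    define c3 where "c3 = Q l z * max 0 (acc_cur th z - acc_prev th z)"
    define c4 where "c4 = Q l z * (1 - max (acc_prev th z) (acc_cur th z))"
    have "0 \<le> c1" "0 \<le> c2" "0 \<le> c3" "0 \<le> c4"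
      unfolding c1_def c2_def c3_def c4_def using Q_pos[of z] acc_bounds[of th z] by auto
    moreover have "Q l z * move_prob th z A = c1 * indicator A (z, z) + c2 * indicator A (z, snd th)
        + c3 * indicator A (fst th, z) + c4 * indicator A th"
      unfolding c1_def c2_def c3_def c4_def move_prob_def by (simp add: algebra_simps)
    ultimately show ?thesis
      unfolding c1_def[symmetric] c2_def[symmetric] c3_def[symmetric] c4_def[symmetric]
      by (simp add: ennreal_plus ennreal_mult ennreal_indicator)
  qed
  show ?thesis
    unfolding split by (simp add: ennreal_suminf_add suminf_indicator[OF assms])
qed

lemma sigma_algebra_borel_pair: "sigma_algebra UNIV (sets (borel :: ('a \<times> 'a) measure))"
  using sets.sigma_algebra_axioms[of "borel :: ('a \<times> 'a) measure"] by simp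

lemma sets_kern_measure: "sets (kern_measure th) = sets borel"
  unfolding joint_kernel_measure_def using sigma_algebra.sets_measure_of_eq[OF sigma_algebra_borel_pair] by blast

lemma space_kern_measure: "space (kern_measure th) = UNIV"
  unfolding joint_kernel_measure_def using sigma_algebra.space_measure_of_eq[OF sigma_algebra_borel_pair] by blast

lemma emeasure_kern_measure:
  assumes A: "A \<in> sets borel" shows "emeasure (kern_measure th) A = ennreal (kern th A)"
  unfolding joint_kernel_measure_def
proof (rule emeasure_measure_of_sigma[OF sigma_algebra_borel_pair _ _ A])
  show "positive (sets borel) (\<lambda>A. ennreal (kern th A))"
    using kern_eq_integral[of "{}" th] by (simp add: positive_def move_prob_def)
  show "countably_additive (sets borel) (\<lambda>A. ennreal (kern th A))"
  proof (unfold countably_additive_def, intro allI impI)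
    fix F :: "nat \<Rightarrow> ('a \<times> 'a) set"
    assume F: "range F \<subseteq> sets borel" "disjoint_family F" "(\<Union>i. F i) \<in> sets borel"
    then have "(\<Sum>i. ennreal (kern th (F i))) = (\<Sum>i. \<integral>\<^sup>+z. ennreal (Q l z * move_prob th z (F i)) \<partial>mu)"
      by (simp add: kern_nn_integral subset_eq)
    also have "\<dots> = (\<integral>\<^sup>+z. (\<Sum>i. ennreal (Q l z * move_prob th z (F i))) \<partial>mu)"
      using F(1) measurable_move_prob
      by (intro nn_integral_suminf[symmetric]) (auto simp: measurable_mu_iff measurable_pair_iff)
    also have "\<dots> = ennreal (kern th (\<Union>i. F i))"
      using F(2,3) by (simp add: ennreal_move_prob_suminf kern_nn_integral)
    finally show "(\<Sum>i. ennreal (kern th (F i))) = ennreal (kern th (\<Union>i. F i))" .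
  qed
qed

lemma prob_space_kern_measure: "prob_space (kern_measure th)"
proof
  have "kern th UNIV = 1" using kern_eq_integral[of UNIV th] move_prob_UNIV integral_Q by simp
  then show "emeasure (kern_measure th) (space (kern_measure th)) = 1"
    using emeasure_kern_measure[of UNIV th] space_kern_measure by simp
qed

lemma measure_kern_measure: "A \<in> sets borel \<Longrightarrow> measure (kern_measure th) A = kern th A"
  using emeasure_kern_measure kern_eq_integral Q_pos move_prob_nonneg
  by (simp add: measure_def Bochner_Integration.integral_nonneg less_imp_le)

lemma measurable_kern_measure: "kern_measure \<in> borel \<rightarrow>\<^sub>M prob_algebra borel"
proof (rule measurable_prob_algebraI)
  show "prob_space (kern_measure th)" for th by (rule prob_space_kern_measure)
  show "kern_measure \<in> borel \<rightarrow>\<^sub>M subprob_algebra borel"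
  proof (rule measurable_subprob_algebra)
    show "subprob_space (kern_measure th)" for th
      by (rule prob_space_imp_subprob_space[OF prob_space_kern_measure])
    show "sets (kern_measure th) = sets borel" for th by (rule sets_kern_measure)
    fix A :: "('a \<times> 'a) set" assume A: "A \<in> sets borel"
    interpret mu: prob_space mu by (rule prob_space_mu)
    have "(\<lambda>(th, z). Q l z * move_prob th z A) \<in> borel_measurable ((borel :: ('a \<times> 'a) measure) \<Otimes>\<^sub>M borel)"
      using measurable_move_prob[OF A] by measurable
    then have "(\<lambda>th. \<integral>z. Q l z * move_prob th z A \<partial>mu) \<in> borel_measurable borel"
      by (intro mu.borel_measurable_lebesgue_integral)
        (simp add: measurable_cong_sets[OF sets_pair_measure_cong[OF refl sets_mu] refl])
    then show "(\<lambda>th. emeasure (kern_measure th) A) \<in> borel_measurable borel"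
      by (simp add: emeasure_kern_measure[OF A] kern_eq_integral[OF A])
  qed
qed

text \<open>Halving keeps the minorizing mass strictly below 1, so that the rate \<open>1 - eps\<close> is positive.\<close>
definition diag_density :: "'a \<Rightarrow> real" where
  "diag_density z = min (Q l z) (min (c * ppi (l - 1) z) (c * ppi l z)) / 2"

lemma diag_density_pos: "0 < diag_density z"
  unfolding diag_density_def using Q_pos[of z] ppi_pos[of "l - 1" z] ppi_pos[of l z] c_pos by simp

lemma measurable_diag_density[measurable]: "diag_density \<in> borel_measurable borel"
  unfolding diag_density_def by measurable

lemma diag_density_le: "diag_density z \<le> Q l z / 2"
  unfolding diag_density_def by simp

lemma integrable_diag_density: "integrable mu diag_density"
proof (rule Bochner_Integration.integrable_bound[OF integrable_Q])
  show "diag_density \<in> borel_measurable mu" by (simp add: measurable_mu_iff)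
  show "AE z in mu. norm (diag_density z) \<le> norm (Q l z)"
  proof (rule AE_I2)
    fix z show "norm (diag_density z) \<le> norm (Q l z)"
      using diag_density_pos[of z] diag_density_le[of z] Q_pos[of z] by simp
  qed
qed

lemma diag_density_le_move_prob: "diag_density z * indicator A (z, z) \<le> Q l z * move_prob th z A"
proof -
  have "2 * diag_density z \<le> Q l z * acc_prev th z" "2 * diag_density z \<le> Q l z * acc_cur th z"
    using acc_lower_bound[of z th] by (auto simp: diag_density_def)
  then have "diag_density z * indicator A (z, z) \<le> Q l z * min (acc_prev th z) (acc_cur th z) * indicator A (z, z)"
    using diag_density_pos[of z] Q_pos[of z] by (auto simp: indicator_def min_mult_distrib_left)
  also have "\<dots> \<le> Q l z * move_prob th z A"
  proof -
    define rest where "rest = max 0 (acc_prev th z - acc_cur th z) * indicator A (z, snd th)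
      + max 0 (acc_cur th z - acc_prev th z) * indicator A (fst th, z)
      + (1 - max (acc_prev th z) (acc_cur th z)) * indicator A th"
    have "0 \<le> Q l z * rest"
      unfolding rest_def using Q_pos[of z] acc_bounds[of th z]
      by (intro mult_nonneg_nonneg add_nonneg_nonneg) (auto simp: indicator_def)
    moreover have "Q l z * move_prob th z A =
        Q l z * min (acc_prev th z) (acc_cur th z) * indicator A (z, z) + Q l z * rest"
      unfolding move_prob_def rest_def by (simp add: algebra_simps)
    ultimately show ?thesis by linarith
  qed
  finally show ?thesis .
qed

definition diag_measure :: "('a \<times> 'a) measure" where
  "diag_measure = distr (density mu diag_density) borel (\<lambda>z. (z, z))"

lemma sets_diag_measure: "sets diag_measure = sets borel"
  unfolding diag_measure_def by simp

lemma emeasure_diag_measure: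
  assumes A: "A \<in> sets borel"
  shows "emeasure diag_measure A = (\<integral>\<^sup>+z. ennreal (diag_density z * indicator A (z, z)) \<partial>mu)"
proof -
  have [measurable]: "A \<in> sets (borel \<Otimes>\<^sub>M borel)" using A sets_borel_pair by simp
  have "(\<lambda>z. (z, z)) \<in> borel \<rightarrow>\<^sub>M (borel \<Otimes>\<^sub>M borel :: ('a \<times> 'a) measure)" by measurable
  then have "(\<lambda>z. (z, z)) \<in> borel \<rightarrow>\<^sub>M (borel :: ('a \<times> 'a) measure)"
    by (simp only: borel_prod)
  then have diag: "(\<lambda>z. (z, z)) \<in> density mu diag_density \<rightarrow>\<^sub>M borel"
    using measurable_cong_sets[of "density mu diag_density" borel borel borel] sets_mu by simp
  have "emeasure diag_measure A = emeasure (density mu diag_density) ((\<lambda>z. (z, z)) -` A)"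
    unfolding diag_measure_def using emeasure_distr[OF diag A] space_mu by simp
  also have "\<dots> = (\<integral>\<^sup>+z. ennreal (diag_density z) * indicator ((\<lambda>z. (z, z)) -` A) z \<partial>mu)"
    by (rule emeasure_density) (use measurable_sets[OF diag A] space_mu in \<open>auto simp: measurable_mu_iff sets_mu\<close>)
  also have "\<dots> = (\<integral>\<^sup>+z. ennreal (diag_density z * indicator A (z, z)) \<partial>mu)"
    by (intro nn_integral_cong) (simp add: indicator_def)
  finally show ?thesis .
qed

lemma diag_measure_le_kern_measure: "emeasure diag_measure A \<le> emeasure (kern_measure th) A"
proof (cases "A \<in> sets borel")
  case True
  have "(\<integral>\<^sup>+z. ennreal (diag_density z * indicator A (z, z)) \<partial>mu)
      \<le> (\<integral>\<^sup>+z. ennreal (Q l z * move_prob th z A) \<partial>mu)"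
    by (intro nn_integral_mono ennreal_leI diag_density_le_move_prob)
  then show ?thesis
    by (simp add: emeasure_diag_measure emeasure_kern_measure kern_nn_integral True)
next
  case False
  then show ?thesis by (simp add: emeasure_notin_sets sets_diag_measure)
qed

lemma emeasure_diag_measure_UNIV: "emeasure diag_measure UNIV = ennreal (\<integral>z. diag_density z \<partial>mu)"
  using emeasure_diag_measure[of UNIV] integrable_diag_density diag_density_pos
  by (simp add: nn_integral_eq_integral less_imp_le)

lemma measure_diag_measure: "measure diag_measure UNIV = (\<integral>z. diag_density z \<partial>mu)"
  using emeasure_diag_measure_UNIV diag_density_pos
  by (simp add: measure_def Bochner_Integration.integral_nonneg less_imp_le)

lemma measure_diag_measure_bounds: "0 < measure diag_measure UNIV" "measure diag_measure UNIV < 1"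
proof -
  interpret mu: prob_space mu by (rule prob_space_mu)
  have "(\<integral>z. diag_density z \<partial>mu) \<noteq> 0"
  proof
    assume "(\<integral>z. diag_density z \<partial>mu) = 0"
    then have "AE z in mu. diag_density z = 0"
      using integral_nonneg_eq_0_iff_AE[OF integrable_diag_density] diag_density_pos
      by (simp add: less_imp_le)
    then have "AE z in mu. False"
    proof eventually_elim
      case (elim z)
      then show ?case using diag_density_pos[of z] by simp
    qed
    then show False by simp
  qed
  then show "0 < measure diag_measure UNIV"
    using diag_density_pos by (simp add: measure_diag_measure Bochner_Integration.integral_nonneg less_le)
  have "(\<integral>z. diag_density z \<partial>mu) \<le> (\<integral>z. Q l z / 2 \<partial>mu)"
    using integrable_diag_density integrable_Q diag_density_le by (intro integral_mono) auto
  then show "measure diag_measure UNIV < 1" using integral_Q by (simp add: measure_diag_measure)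
qed

lemma doeblin_kern_measure: "doeblin_kernel borel kern_measure diag_measure"
proof (rule doeblin_kernel.intro)
  show "finite_measure diag_measure"
    using emeasure_diag_measure_UNIV by (intro finite_measureI) (simp add: diag_measure_def)
  show "space borel = UNIV" by simp
  show "kern_measure \<in> borel \<rightarrow>\<^sub>M prob_algebra borel" by (rule measurable_kern_measure)
  show "sets diag_measure = sets borel" by (rule sets_diag_measure)
  show "emeasure diag_measure A \<le> emeasure (kern_measure th) A" for th A
    by (rule diag_measure_le_kern_measure)
  show "0 < measure diag_measure UNIV" by (rule measure_diag_measure_bounds)
qed

lemma coupled_sampler_uniformly_ergodic:
  "\<exists>nu. invariant_prob mu ppi Q l nu
      \<and> (\<forall>nu'. invariant_prob mu ppi Q l nu' \<longrightarrow> nu' = nu)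
      \<and> (\<exists>V Vmax r M. Vmax \<ge> 1 \<and>
            (\<forall>th. 1 \<le> V th \<and> V th \<le> Vmax) \<and> integrable nu V \<and>
            0 < r \<and> r < 1 \<and> 0 < M \<and>
            (\<forall>f :: 'a \<times> 'a \<Rightarrow> real. f \<in> borel_measurable borel \<longrightarrow> (\<forall>th. \<bar>f th\<bar> \<le> V th) \<longrightarrow>
               (\<forall>th n. \<bar>((markov_op mu ppi Q l ^^ n) f) th - (\<integral>eta. f eta \<partial>nu)\<bar>
                        \<le> M * Vmax * r ^ n)))"
proof -
  interpret doeblin_kernel borel kern_measure diag_measure by (rule doeblin_kern_measure)
  have "(\<integral>x. measure (kern_measure x) A \<partial>N) = (\<integral>x. kern x A \<partial>N)" if "A \<in> sets borel" for A N
    using that by (intro Bochner_Integration.integral_cong refl measure_kern_measure)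
  then have invariant_iff: "invariant_prob mu ppi Q l N \<longleftrightarrow> prob_space N \<and> sets N = sets borel \<and>
      (\<forall>A\<in>sets borel. measure N A = (\<integral>x. measure (kern_measure x) A \<partial>N))" for N
    unfolding invariant_prob_def by auto
  have markov: "markov_op mu ppi Q l = P" by (intro ext) (simp only: markov_op_def P_def)
  have convergence: "\<bar>(P ^^ n) f th - (\<integral>y. f y \<partial>stationary)\<bar> \<le> 2 * 1 * (1 - eps) ^ n"
    if "f \<in> borel_measurable borel" "\<forall>th. \<bar>f th\<bar> \<le> 1" for f th n
  proof -
    have "-1 \<le> f x" "f x \<le> 1" for x using that(2)[rule_format, of x] by arith+
    then show ?thesis using stationary_convergence[OF that(1), of "-1" 1 n th] by (simp add: mult.commute)
  qed
  have rate: "0 < 1 - eps" "1 - eps < 1" using measure_diag_measure_bounds by auto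
  have "integrable stationary (\<lambda>_. 1 :: real)"
    using prob_space_stationary by (simp add: prob_space_def finite_measure.integrable_const)
  show ?thesis
  proof (rule exI[of _ stationary], intro conjI allI impI)
    show "invariant_prob mu ppi Q l stationary"
      unfolding invariant_iff using prob_space_stationary sets_stationary stationary_invariant by blast
    show "nu' = stationary" if "invariant_prob mu ppi Q l nu'" for nu'
      using that unfolding invariant_iff by (blast intro: invariant_measure_unique)
    show "\<exists>V Vmax r M. Vmax \<ge> 1 \<and> (\<forall>th. 1 \<le> V th \<and> V th \<le> Vmax) \<and> integrable stationary V \<and>
        0 < r \<and> r < 1 \<and> 0 < M \<and>
        (\<forall>f :: 'a \<times> 'a \<Rightarrow> real. f \<in> borel_measurable borel \<longrightarrow> (\<forall>th. \<bar>f th\<bar> \<le> V th) \<longrightarrow>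
           (\<forall>th n. \<bar>((markov_op mu ppi Q l ^^ n) f) th - (\<integral>eta. f eta \<partial>stationary)\<bar>
                    \<le> M * Vmax * r ^ n))"
      using rate \<open>integrable stationary (\<lambda>_. 1)\<close> convergence unfolding markov
      by (intro exI[of _ "\<lambda>_. 1"] exI[of _ 1] exI[of _ "1 - eps"] exI[of _ 2]) auto
  qed
qed

end

lemma coupled_sampler_exists:
  fixes mu :: "'a::second_countable_topology measure"
  assumes "prob_space mu" "sets mu = sets borel" "integrable mu (Q l)" "(\<integral>x. Q l x \<partial>mu) = 1"
    and Q: "continuous_on UNIV (Q l)" "\<And>z. Q l z > 0"
    and ppi: "\<And>j. j \<in> {l - 1, l} \<Longrightarrow> continuous_on UNIV (ppi j)"
      "\<And>j z. j \<in> {l - 1, l} \<Longrightarrow> ppi j z > 0"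
    and sublevels: "\<And>j r. j \<in> {l - 1, l} \<Longrightarrow> r > 0 \<Longrightarrow> compact {x. Q l x / ppi j x \<le> r}"
  shows "\<exists>c. coupled_sampler mu ppi Q l c"
proof -
  define ratio where "ratio j x = Q l x / ppi j x" for j x
  have "\<exists>c>0. \<forall>x. c \<le> min (ratio (l - 1) x) (ratio l x)"
  proof (rule positive_lower_bound_of_compact_sublevels)
    have "continuous_on UNIV (ratio j)" if "j \<in> {l - 1, l}" for j
    proof -
      have "\<forall>x\<in>UNIV. ppi j x \<noteq> 0" using ppi(2)[OF that] by (metis less_irrefl)
      then show ?thesis unfolding ratio_def using Q(1) ppi(1)[OF that] by (rule continuous_on_divide[rotated 2])
    qed
    then show "continuous_on UNIV (\<lambda>x. min (ratio (l - 1) x) (ratio l x))"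
      by (intro continuous_on_min) auto
    show "0 < min (ratio (l - 1) x) (ratio l x)" for x
      using Q(2)[of x] ppi(2)[of "l - 1" x] ppi(2)[of l x] by (simp add: ratio_def)
    show "compact {x. min (ratio (l - 1) x) (ratio l x) \<le> r}" if "r > 0" for r
    proof -
      have "{x. min (ratio (l - 1) x) (ratio l x) \<le> r} = {x. ratio (l - 1) x \<le> r} \<union> {x. ratio l x \<le> r}"
        by (auto simp: min_le_iff_disj)
      then show ?thesis using sublevels[OF _ that] by (simp add: ratio_def compact_Un)
    qed
  qed
  then obtain c where c: "c > 0" "\<And>x. c \<le> min (ratio (l - 1) x) (ratio l x)" by blast
  have bound: "c \<le> Q l x / ppi j x" if "j \<in> {l - 1, l}" for j x
    using c(2)[of x] that by (auto simp: ratio_def)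
  have "coupled_sampler mu ppi Q l c"
    by (rule coupled_sampler.intro; fact assms(1-4) Q ppi c(1) bound)
  then show ?thesis ..
qed

theorem mainTheorem1:
  fixes mu :: "'a :: {banach, second_countable_topology} measure"
    and ppi Q :: "nat \<Rightarrow> 'a \<Rightarrow> real"
    and L l :: nat
  assumes prior: "prob_space mu" "sets mu = sets borel"
    and post_dens: "\<And>j. j \<le> L \<Longrightarrow> integrable mu (ppi j) \<and> (\<integral>x. ppi j x \<partial>mu) = 1"
    and prop_dens: "\<And>k. 1 \<le> k \<Longrightarrow> k \<le> L \<Longrightarrow> integrable mu (Q k) \<and> (\<integral>x. Q k x \<partial>mu) = 1"
    and A11: "\<And>k. 1 \<le> k \<Longrightarrow> k \<le> L \<Longrightarrow> continuous_on UNIV (Q k) \<and> (\<forall>z. Q k z > 0)"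
    and A12: "\<And>j. j \<le> L \<Longrightarrow> continuous_on UNIV (ppi j) \<and> (\<forall>z. ppi j z > 0)"
    and A13: "\<And>k j cr. 1 \<le> k \<Longrightarrow> k \<le> L \<Longrightarrow> j \<in> {k - 1, k} \<Longrightarrow> cr > 0 \<Longrightarrow>
                compact {th. Q k th / ppi j th \<le> cr}"
    and A14: "\<exists>c. 0 < c \<and> c < 1 \<and> (\<forall>k j. 1 \<le> k \<longrightarrow> k \<le> L \<longrightarrow> j \<in> {k - 1, k} \<longrightarrow>
                (AE z in mu. Q k z / ppi j z \<ge> c))"
    and A15: "\<exists>r Cr. r > 1 \<and> Cr > 0 \<and> (\<forall>k. 1 \<le> k \<longrightarrow> k \<le> L \<longrightarrow>
                (\<integral>\<^sup>+ z. ennreal (Q k z powr r) \<partial>mu) \<le> ennreal Cr)"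
    and lvl: "1 \<le> l" "l \<le> L"
  shows "\<exists>nu. invariant_prob mu ppi Q l nu
          \<and> (\<forall>nu'. invariant_prob mu ppi Q l nu' \<longrightarrow> nu' = nu)
          \<and> (\<exists>V Vmax r M. Vmax \<ge> 1 \<and>
                (\<forall>th. 1 \<le> V th \<and> V th \<le> Vmax) \<and> integrable nu V \<and>
                0 < r \<and> r < 1 \<and> 0 < M \<and>
                (\<forall>f :: 'a \<times> 'a \<Rightarrow> real. f \<in> borel_measurable borel \<longrightarrow> (\<forall>th. \<bar>f th\<bar> \<le> V th) \<longrightarrow>
                   (\<forall>th n. \<bar>((markov_op mu ppi Q l ^^ n) f) th - (\<integral>eta. f eta \<partial>nu)\<bar>
                            \<le> M * Vmax * r ^ n)))"
proof -
  \<comment> \<open>Only (1.1)-(1.3) are used: they already bound \<open>Q l / ppi j\<close> below everywhere.\<close>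
  have "\<exists>c. coupled_sampler mu ppi Q l c"
  proof (rule coupled_sampler_exists)
    show "continuous_on UNIV (ppi j)" "ppi j z > 0" if "j \<in> {l - 1, l}" for j z
      using A12[of j] that lvl by auto
    show "compact {x. Q l x / ppi j x \<le> r}" if "j \<in> {l - 1, l}" "r > 0" for j r
      using A13[OF lvl that] .
    show "prob_space mu" "sets mu = sets borel" by (fact prior)+
    show "integrable mu (Q l)" "(\<integral>x. Q l x \<partial>mu) = 1" using prop_dens[OF lvl] by auto
    show "continuous_on UNIV (Q l)" "Q l z > 0" for z using A11[OF lvl] by auto
  qed
  then show ?thesis using coupled_sampler.coupled_sampler_uniformly_ergodic by blast
qed

end
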